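(* Let $(X,c)$ be a finite metric space, let $k\ge 1$, let $M\subseteq X$ with $|M| = k$, and let $R\subseteq X$ with $|R| = j > k$. Then $$\min_{r\in R}\ \mathrm{cost}(R\setminus\{r\}) - \mathrm{cost}(R) \;\le\; \frac{2}{j-k}\,\mathrm{cost}(M).$$ In particular, if $R_j$ and $R_{j-1}$ are consecutive sets produced by the Reverse Greedy algorithm, with $j>k$, then $\mathrm{cost}(R_{j-1})-\mathrm{cost}(R_j) \le \frac{2}{j-k}\,\mathrm{cost}(M)$.
   Context: For $x\in X$ and nonempty $F\subseteq X$, $c_{xF}=\min_{f\in F}c_{xf}$, and $\mathrm{cost}(F)=\sum_{x\in X} c_{xF}$. The Reverse Greedy algorithm on an $n$-point space $X$: set $R_n = X$; for $t = n, n-1,\dots,2$, set $R_{t-1} = R_t\setminus\{r_t\}$ where $r_t\in R_t$ is chosen (ties broken arbitrarily) to minimize $\mathrm{cost}(R_{t-1})$. *)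

theory Defs
  imports Main "HOL-Library.Multiset" Complex_Main
begin

definition finite_metric_space :: "'a set \<Rightarrow> ('a \<Rightarrow> 'a \<Rightarrow> real) \<Rightarrow> bool" where
  "finite_metric_space X c \<longleftrightarrow> finite X \<and>
     (\<forall>x\<in>X. \<forall>y\<in>X. 0 \<le> c x y) \<and>
     (\<forall>x\<in>X. \<forall>y\<in>X. c x y = 0 \<longleftrightarrow> x = y) \<and>
     (\<forall>x\<in>X. \<forall>y\<in>X. c x y = c y x) \<and>
     (\<forall>x\<in>X. \<forall>y\<in>X. \<forall>z\<in>X. c x z \<le> c x y + c y z)"

definition dist_to_set :: "('a \<Rightarrow> 'a \<Rightarrow> real) \<Rightarrow> 'a \<Rightarrow> 'a set \<Rightarrow> real" where
  "dist_to_set c x F = Min ((\<lambda>f. c x f) ` F)"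

definition cost :: "'a set \<Rightarrow> ('a \<Rightarrow> 'a \<Rightarrow> real) \<Rightarrow> 'a set \<Rightarrow> real" where
  "cost X c F = (\<Sum>x\<in>X. dist_to_set c x F)"

end

theory Submission
  imports Defs
begin

text \<open>Let \<open>a = nearest c R\<close> send every point to a nearest centre of \<open>R\<close>. At most \<open>k\<close> centres of \<open>R\<close>
  are of the form \<open>a m\<close> with \<open>m \<in> M\<close>, so at least \<open>j - k\<close> centres \<open>r\<close> avoid \<open>a ` M\<close>.
  Removing such an \<open>r\<close> only affects the points \<open>x\<close> with \<open>a x = r\<close>; each of them can be
  reassigned to \<open>a m\<close>, where \<open>m\<close> is a nearest point of \<open>M\<close> to \<open>x\<close>, and the triangle
  inequality bounds the extra cost by \<open>2 c\<^sub>x\<^sub>M\<close>. These fibers are disjoint, so the extra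
  costs of all such removals add up to at most \<open>2 cost(M)\<close>, and the cheapest one costs
  at most the average.\<close>

lemma dist_to_set_le:
  assumes "finite F" "f \<in> F"
  shows "dist_to_set c x F \<le> c x f"
  using assms unfolding dist_to_set_def by (intro Min_le) auto

definition nearest :: "('a \<Rightarrow> 'a \<Rightarrow> real) \<Rightarrow> 'a set \<Rightarrow> 'a \<Rightarrow> 'a" where
  "nearest c F x = (SOME f. f \<in> F \<and> dist_to_set c x F = c x f)"

lemma nearest:
  assumes "finite F" "F \<noteq> {}"
  shows nearest_in: "nearest c F x \<in> F"
    and dist_to_set_nearest: "dist_to_set c x F = c x (nearest c F x)"
proof -
  have "Min ((\<lambda>f. c x f) ` F) \<in> (\<lambda>f. c x f) ` F"
    using assms by (intro Min_in) auto
  then have "\<exists>f. f \<in> F \<and> dist_to_set c x F = c x f"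
    unfolding dist_to_set_def by auto
  then have "nearest c F x \<in> F \<and> dist_to_set c x F = c x (nearest c F x)"
    unfolding nearest_def by (rule someI_ex)
  then show "nearest c F x \<in> F" "dist_to_set c x F = c x (nearest c F x)"
    by auto
qed

lemma finite_metric_space_finite_subset:
  assumes "finite_metric_space X c" "F \<subseteq> X"
  shows "finite F"
  using assms(1) finite_subset[OF assms(2)] unfolding finite_metric_space_def by simp

lemma dist_to_set_nonneg:
  assumes "finite_metric_space X c" "x \<in> X" "F \<subseteq> X" "F \<noteq> {}"
  shows "0 \<le> dist_to_set c x F"
proof -
  have "finite F"
    using assms(1,3) by (rule finite_metric_space_finite_subset)
  then show ?thesis
    using assms nearest[of F c x] unfolding finite_metric_space_def by auto
qed

lemma cost_nonneg:
  assumes "finite_metric_space X c" "F \<subseteq> X" "F \<noteq> {}"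
  shows "0 \<le> cost X c F"
  unfolding cost_def using assms by (intro sum_nonneg dist_to_set_nonneg)

lemma metric_reassign_le:
  assumes metric: "finite_metric_space X c"
    and "x \<in> X" "m \<in> X" "r \<in> X" "s \<in> X" and closer: "c m s \<le> c m r"
  shows "c x s \<le> c x r + 2 * c x m"
proof -
  have "c x s \<le> c x m + c m s"
    using metric assms(2-5) unfolding finite_metric_space_def by blast
  also have "\<dots> \<le> c x m + c m r"
    using closer by simp
  also have "c m r \<le> c m x + c x r"
    using metric assms(2-5) unfolding finite_metric_space_def by blast
  also have "c m x = c x m"
    using metric assms(2-5) unfolding finite_metric_space_def by blast
  finally show ?thesis by simp
qed

lemma dist_to_set_remove_le:
  assumes metric: "finite_metric_space X c"
    and R: "R \<subseteq> X" "R \<noteq> {}" and M: "M \<subseteq> X" "M \<noteq> {}" and x: "x \<in> X"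
    and r: "r \<notin> nearest c R ` M"
  shows "dist_to_set c x (R - {r})
           \<le> dist_to_set c x R + (if nearest c R x = r then 2 * dist_to_set c x M else 0)"
proof -
  have fin: "finite R" "finite M"
    using finite_metric_space_finite_subset[OF metric] R(1) M(1) by auto
  show ?thesis
  proof (cases "nearest c R x = r")
    case False
    then have "dist_to_set c x (R - {r}) \<le> c x (nearest c R x)"
      using fin R by (intro dist_to_set_le) (auto simp: nearest_in)
    then show ?thesis
      using False fin R by (simp add: dist_to_set_nearest)
  next
    case True
    define m where "m = nearest c M x"
    define s where "s = nearest c R m"
    have m: "m \<in> M" "dist_to_set c x M = c x m"
      unfolding m_def using nearest[OF fin(2) M(2)] by auto
    have "s \<noteq> r"
      using r m(1) unfolding s_def by auto
    then have s: "s \<in> R - {r}"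
      unfolding s_def using fin R by (simp add: nearest_in)
    have r_in: "r \<in> R"
      using nearest_in[OF fin(1) R(2), of c x] True by simp
    then have "c m s \<le> c m r"
      using dist_to_set_le[OF fin(1), of r c m] dist_to_set_nearest[OF fin(1) R(2), of c m]
      unfolding s_def by simp
    then have "c x s \<le> c x r + 2 * c x m"
      using s m r_in R M x by (intro metric_reassign_le[OF metric]) auto
    moreover have "dist_to_set c x (R - {r}) \<le> c x s"
      using fin s by (intro dist_to_set_le) auto
    ultimately show ?thesis
      using True m fin R by (simp add: dist_to_set_nearest)
  qed
qed

lemma cost_remove_le_fiber:
  assumes metric: "finite_metric_space X c"
    and "R \<subseteq> X" "R \<noteq> {}" "M \<subseteq> X" "M \<noteq> {}"
    and "r \<notin> nearest c R ` M"
  shows "cost X c (R - {r}) - cost X c R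
           \<le> 2 * (\<Sum>x\<in>{x\<in>X. nearest c R x = r}. dist_to_set c x M)"
proof -
  have "finite X"
    using metric unfolding finite_metric_space_def by simp
  have "cost X c (R - {r})
          \<le> (\<Sum>x\<in>X. dist_to_set c x R + (if nearest c R x = r then 2 * dist_to_set c x M else 0))"
    unfolding cost_def using assms by (intro sum_mono dist_to_set_remove_le)
  also have "\<dots> = cost X c R + 2 * (\<Sum>x\<in>{x\<in>X. nearest c R x = r}. dist_to_set c x M)"
    using \<open>finite X\<close> unfolding cost_def sum.distrib
    by (simp add: sum.inter_filter sum_distrib_left if_distrib[of "(*) 2"] cong: if_cong)
  finally show ?thesis by simp
qed

lemma sum_fibers_le:
  fixes h :: "'a \<Rightarrow> 'b::ordered_comm_monoid_add"
  assumes "finite X" "finite T" "\<And>x. x \<in> X \<Longrightarrow> 0 \<le> h x"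
  shows "(\<Sum>t\<in>T. \<Sum>x\<in>{x\<in>X. f x = t}. h x) \<le> (\<Sum>x\<in>X. h x)"
proof -
  let ?S = "{x\<in>X. f x \<in> T}"
  have "(\<Sum>t\<in>T. \<Sum>x\<in>{x\<in>X. f x = t}. h x) = (\<Sum>t\<in>T. \<Sum>x\<in>{x. x \<in> ?S \<and> f x = t}. h x)"
    by (rule sum.cong[OF refl], rule sum.cong) auto
  also have "\<dots> = (\<Sum>x\<in>?S. h x)"
    by (rule sum.group) (use assms in auto)
  also have "\<dots> \<le> (\<Sum>x\<in>X. h x)"
    using assms by (intro sum_mono2) auto
  finally show ?thesis .
qed

lemma card_Diff_image_ge:
  assumes "finite M"
  shows "card R - card M \<le> card (R - f ` M)"
  using diff_card_le_card_Diff[of "f ` M" R] card_image_le[OF assms, of f] assms by auto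

lemma ex_remove_cost_le:
  assumes metric: "finite_metric_space X c"
    and R: "R \<subseteq> X" and M: "M \<subseteq> X" "M \<noteq> {}" and card_less: "card M < card R"
  shows "\<exists>r\<in>R. cost X c (R - {r}) - cost X c R \<le> 2 * cost X c M / (real (card R) - real (card M))"
proof -
  define R' where "R' = R - nearest c R ` M"
  define g where "g r = cost X c (R - {r}) - cost X c R" for r
  have fin: "finite X" "finite M" "finite R'"
    using finite_metric_space_finite_subset[OF metric] R M unfolding R'_def by auto
  have card_R': "real (card R) - real (card M) \<le> real (card R')"
    using card_Diff_image_ge[OF fin(2), of R "nearest c R"] card_less unfolding R'_def by linarith
  then have card_R'_pos: "0 < real (card R')"
    using card_less by linarith
  then have "R' \<noteq> {}"
    by auto
  then have "Min (g ` R') \<in> g ` R'"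
    using fin(3) by simp
  then obtain r where r: "r \<in> R'" "g r = Min (g ` R')"
    by auto
  have "R \<noteq> {}"
    using card_less by auto
  have "real (card R') * g r \<le> (\<Sum>r\<in>R'. g r)"
    using r fin(3) by (intro sum_bounded_below) simp
  also have "\<dots> \<le> (\<Sum>r\<in>R'. 2 * (\<Sum>x\<in>{x\<in>X. nearest c R x = r}. dist_to_set c x M))"
    unfolding g_def R'_def using metric R M \<open>R \<noteq> {}\<close> by (intro sum_mono cost_remove_le_fiber) auto
  also have "\<dots> \<le> 2 * cost X c M"
    unfolding cost_def sum_distrib_left[symmetric]
    using fin metric M by (simp add: sum_fibers_le dist_to_set_nonneg)
  finally have "g r \<le> 2 * cost X c M / real (card R')"
    using card_R'_pos by (simp add: pos_le_divide_eq mult.commute)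
  also have "\<dots> \<le> 2 * cost X c M / (real (card R) - real (card M))"
    using card_R' card_less cost_nonneg[OF metric M] by (intro divide_left_mono) auto
  finally show ?thesis
    using r unfolding g_def R'_def by blast
qed

theorem mainTheorem3:
  fixes X :: "'a set" and c :: "'a \<Rightarrow> 'a \<Rightarrow> real" and M R :: "'a set" and k j :: nat
  assumes "finite_metric_space X c"
    and "k \<ge> 1"
    and "M \<subseteq> X" and "card M = k"
    and "R \<subseteq> X" and "card R = j" and "j > k"
  shows "(MIN r\<in>R. cost X c (R - {r})) - cost X c R \<le> 2 / (real j - real k) * cost X c M"
proof -
  have "M \<noteq> {}"
    using assms(2,4) by auto
  then obtain r where "r \<in> R"
    and r: "cost X c (R - {r}) - cost X c R \<le> 2 * cost X c M / (real j - real k)"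
    using ex_remove_cost_le[OF assms(1,5,3)] assms(4,6,7) by auto
  have "finite R"
    using assms(1,5) by (rule finite_metric_space_finite_subset)
  then have "(MIN r\<in>R. cost X c (R - {r})) \<le> cost X c (R - {r})"
    using \<open>r \<in> R\<close> by (intro Min_le) auto
  then show ?thesis
    using r by simp
qed

end
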